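(* Let $X,Y\in\mathbb R^{d\times k}$ with $X^\top X=Y^\top Y=I_k$, and let $\theta\in\mathbb R^k$ be the vector of principal angles between their column spans. If $\|\theta\|_\infty\le\frac\pi4$, then $$\frac\pi2\|R_X^{-1}(Y)\|_F\ \ge\ \frac\pi2 d_F(X,Y)\ \ge\ d_A(X,Y)\ \ge\ \frac1{\sqrt2}\|R_X^{-1}(Y)\|_F.$$
   Context: Principal angles: if $X^\top Y=U\cos(\Theta)V^\top$ is a singular value decomposition with $\Theta=\mathrm{diag}(\theta_1,\dots,\theta_k)$, $\theta_i\in[0,\pi/2]$, then $\theta=(\theta_1,\dots,\theta_k)$. The arc-length distance is $d_A(X,Y)=\|\theta\|_2$ and the projection Frobenius distance is $d_F(X,Y)=\|\sin\theta\|_2=2^{-1/2}\|XX^\top-YY^\top\|_F$. For $X^\top Y$ invertible, $R_X^{-1}(Y)=(I-XX^\top)Y(X^\top Y)^{-1}$, the inverse of the retraction $R_X(V)=(X+V)[(X+V)^\top(X+V)]^{-1/2}$ on the Grassmann manifold. *)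

theory Defs
  imports "HOL-Analysis.Analysis"
begin

text \<open>Matrices are represented as real^'c^'r (rows indexed by 'r, columns by 'c).
  The dimensions d and k are the finite index types 'd and 'k.\<close>

definition orthogonal_mat :: "real^'n^'n \<Rightarrow> bool" where
  "orthogonal_mat U \<longleftrightarrow> transpose U ** U = mat 1 \<and> U ** transpose U = mat 1"

definition diag_mat :: "real^'n \<Rightarrow> real^'n^'n" where
  "diag_mat v = (\<chi> i j. if i = j then v $ i else 0)"

definition principal_angles :: "real^'k^'d \<Rightarrow> real^'k^'d \<Rightarrow> real^'k \<Rightarrow> bool" where
  "principal_angles X Y \<theta> \<longleftrightarrow>
     (\<forall>i. 0 \<le> \<theta> $ i \<and> \<theta> $ i \<le> pi / 2) \<and>
     (\<exists>U V. orthogonal_mat U \<and> orthogonal_mat V \<and>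
        transpose X ** Y = U ** diag_mat (\<chi> i. cos (\<theta> $ i)) ** transpose V)"

definition frob_norm :: "real^'c^'r \<Rightarrow> real" where
  "frob_norm A = sqrt (\<Sum>i\<in>UNIV. \<Sum>j\<in>UNIV. (A $ i $ j)\<^sup>2)"

definition vec_norm2 :: "real^'k \<Rightarrow> real" where
  "vec_norm2 v = sqrt (\<Sum>i\<in>UNIV. (v $ i)\<^sup>2)"

text \<open>Arc-length distance d_A = ||theta||_2, projection Frobenius distance d_F = ||sin theta||_2.\<close>
definition dist_A :: "real^'k \<Rightarrow> real" where
  "dist_A \<theta> = vec_norm2 \<theta>"

definition dist_F :: "real^'k \<Rightarrow> real" where
  "dist_F \<theta> = vec_norm2 (\<chi> i. sin (\<theta> $ i))"

definition inv_retr :: "real^'k^'d \<Rightarrow> real^'k^'d \<Rightarrow> real^'k^'d" where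
  "inv_retr X Y = (mat 1 - X ** transpose X) ** Y ** matrix_inv (transpose X ** Y)"

end

(*
  Write X^T Y = U diag(cos theta) V^T. Then the inverse retraction is
  (I - X X^T) Y V diag(1 / cos theta) U^T, and since Y^T (I - X X^T) Y = I - (X^T Y)^T (X^T Y)
  its Gram matrix is conjugate to diag((1 - cos^2 theta) / cos^2 theta) = diag(tan^2 theta).
  So the Frobenius norm of the inverse retraction is the 2-norm of tan theta, and the three
  inequalities follow coordinatewise from sin t <= tan t, Jordan's inequality
  t <= pi/2 sin t, and tan t <= sqrt 2 t on [0, pi/4].
*)

theory Submission
  imports Defs
begin

lemma matrix_diff_ldistrib: "(A::real^'n^'m) ** (B - C) = A ** B - A ** C"
  by (simp add: matrix_matrix_mult_def vec_eq_iff sum_subtractf algebra_simps)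

lemma matrix_diff_rdistrib: "((A::real^'n^'m) - B) ** C = A ** C - B ** C"
  by (simp add: matrix_matrix_mult_def vec_eq_iff sum_subtractf algebra_simps)

lemma transpose_diff: "transpose ((A::real^'n^'m) - B) = transpose A - transpose B"
  by (simp add: transpose_def vec_eq_iff)

lemma matrix_inv_unique:
  assumes "(A::real^'n^'n) ** B = mat 1" and "B ** A = mat 1"
  shows "matrix_inv A = B"
proof -
  have "A ** matrix_inv A = mat 1 \<and> matrix_inv A ** A = mat 1"
    unfolding matrix_inv_def by (rule someI_ex) (use assms in blast)
  then have "matrix_inv A = matrix_inv A ** (A ** B)"
    using assms by (simp add: matrix_mul_assoc)
  also have "\<dots> = B"
    using \<open>_ \<and> matrix_inv A ** A = mat 1\<close> by (simp add: matrix_mul_assoc)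
  finally show ?thesis .
qed

lemma frob_norm_eq_sqrt_trace: "frob_norm (A::real^'c^'r) = sqrt (trace (transpose A ** A))"
proof -
  have "trace (transpose A ** A) = (\<Sum>j\<in>UNIV. \<Sum>i\<in>UNIV. (A $ i $ j)\<^sup>2)"
    by (simp add: trace_def matrix_matrix_mult_def transpose_def power2_eq_square)
  also have "\<dots> = (\<Sum>i\<in>UNIV. \<Sum>j\<in>UNIV. (A $ i $ j)\<^sup>2)"
    by (rule sum.swap)
  finally show ?thesis
    by (simp add: frob_norm_def)
qed

lemma frob_norm_mult_orthogonal:
  fixes A :: "real^'k^'d"
  assumes "orthogonal_mat U"
  shows "frob_norm (A ** transpose U) = frob_norm A"
proof -
  have "trace (transpose (A ** transpose U) ** (A ** transpose U))
        = trace (U ** (transpose A ** A ** transpose U))"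
    by (simp add: matrix_transpose_mul matrix_mul_assoc)
  also have "\<dots> = trace (transpose A ** A ** transpose U ** U)"
    by (rule trace_mul_sym)
  also have "\<dots> = trace (transpose A ** A)"
    using assms by (simp add: orthogonal_mat_def flip: matrix_mul_assoc)
  finally show ?thesis
    by (simp add: frob_norm_eq_sqrt_trace)
qed

lemma diag_mat_mult: "diag_mat a ** diag_mat b = diag_mat (a * b)"
proof -
  have "(\<Sum>k\<in>UNIV. (if i = k then a $ i else 0) * (if k = j then b $ k else 0))
        = (if i = j then a $ i * b $ i else 0)" for i j :: 'a
  proof -
    have "(\<Sum>k\<in>UNIV. (if i = k then a $ i else 0) * (if k = j then b $ k else 0))
          = (\<Sum>k\<in>UNIV. if k = i then a $ i * (if i = j then b $ i else 0) else 0)"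
      by (rule sum.cong) auto
    then show ?thesis
      by simp
  qed
  then show ?thesis
    by (simp add: diag_mat_def matrix_matrix_mult_def vec_eq_iff)
qed

lemma diag_mat_one: "diag_mat 1 = mat 1"
  by (simp add: diag_mat_def mat_def vec_eq_iff)

lemma diag_mat_diff: "diag_mat a - diag_mat b = diag_mat (a - b)"
  by (simp add: diag_mat_def vec_eq_iff)

lemma transpose_diag_mat: "transpose (diag_mat a) = diag_mat a"
  by (simp add: diag_mat_def transpose_def vec_eq_iff)

lemma trace_diag_mat: "trace (diag_mat a) = (\<Sum>i\<in>UNIV. a $ i)"
  by (simp add: diag_mat_def trace_def)

lemma complement_projector_idempotent:
  fixes X :: "real^'k^'d"
  assumes "transpose X ** X = mat 1"
  shows "(mat 1 - X ** transpose X) ** (mat 1 - X ** transpose X) = mat 1 - X ** transpose X"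
proof -
  have "X ** transpose X ** (X ** transpose X) = X ** (transpose X ** X) ** transpose X"
    by (simp add: matrix_mul_assoc)
  also have "\<dots> = X ** transpose X"
    using assms by simp
  finally have XX: "X ** transpose X ** (X ** transpose X) = X ** transpose X" .
  show ?thesis
    by (simp add: matrix_diff_ldistrib matrix_diff_rdistrib XX)
qed

lemma gram_complement_projection:
  fixes X Y :: "real^'k^'d"
  assumes "transpose X ** X = mat 1" and "transpose Y ** Y = mat 1"
  shows "transpose ((mat 1 - X ** transpose X) ** Y) ** ((mat 1 - X ** transpose X) ** Y)
       = mat 1 - transpose (transpose X ** Y) ** (transpose X ** Y)"
proof -
  let ?K = "mat 1 - X ** transpose X"
  have "transpose ?K = ?K"
    by (simp add: transpose_diff matrix_transpose_mul)
  then have "transpose (?K ** Y) ** (?K ** Y) = transpose Y ** (?K ** ?K) ** Y"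
    by (simp add: matrix_transpose_mul matrix_mul_assoc)
  also have "\<dots> = transpose Y ** ?K ** Y"
    using assms(1) by (simp add: complement_projector_idempotent matrix_mul_assoc)
  also have "\<dots> = mat 1 - transpose (transpose X ** Y) ** (transpose X ** Y)"
    using assms(2)
    by (simp add: matrix_diff_ldistrib matrix_diff_rdistrib matrix_transpose_mul matrix_mul_assoc)
  finally show ?thesis .
qed

lemma matrix_inv_svd:
  fixes U V :: "real^'k^'k"
  assumes U: "orthogonal_mat U" and V: "orthogonal_mat V" and c: "\<forall>i. c $ i \<noteq> 0"
  shows "matrix_inv (U ** diag_mat c ** transpose V)
       = V ** diag_mat (\<chi> i. inverse (c $ i)) ** transpose U"
proof (rule matrix_inv_unique)
  let ?C = "diag_mat c" and ?D = "diag_mat (\<chi> i. inverse (c $ i))"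
  have CD: "?C ** ?D = mat 1" and DC: "?D ** ?C = mat 1"
    using c by (simp_all add: diag_mat_mult times_vec_def flip: diag_mat_one one_vec_def)
  have "U ** ?C ** transpose V ** (V ** ?D ** transpose U)
      = U ** (?C ** (transpose V ** V) ** ?D) ** transpose U"
    by (simp add: matrix_mul_assoc)
  then show "U ** ?C ** transpose V ** (V ** ?D ** transpose U) = mat 1"
    using U V CD by (simp add: orthogonal_mat_def)
  have "V ** ?D ** transpose U ** (U ** ?C ** transpose V)
      = V ** (?D ** (transpose U ** U) ** ?C) ** transpose V"
    by (simp add: matrix_mul_assoc)
  then show "V ** ?D ** transpose U ** (U ** ?C ** transpose V) = mat 1"
    using U V DC by (simp add: orthogonal_mat_def)
qed

lemma gram_svd:
  fixes U V :: "real^'k^'k"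
  assumes "orthogonal_mat U"
  shows "transpose (U ** diag_mat c ** transpose V) ** (U ** diag_mat c ** transpose V)
       = V ** diag_mat (c * c) ** transpose V"
proof -
  have "transpose (U ** diag_mat c ** transpose V) ** (U ** diag_mat c ** transpose V)
      = V ** (diag_mat c ** (transpose U ** U) ** diag_mat c) ** transpose V"
    by (simp add: matrix_transpose_mul transpose_diag_mat matrix_mul_assoc)
  then show ?thesis
    using assms by (simp add: orthogonal_mat_def diag_mat_mult)
qed

lemma frob_norm_inv_retr_svd:
  fixes X Y :: "real^'k^'d" and U V :: "real^'k^'k"
  assumes XX: "transpose X ** X = mat 1" and YY: "transpose Y ** Y = mat 1"
    and U: "orthogonal_mat U" and V: "orthogonal_mat V"
    and P: "transpose X ** Y = U ** diag_mat c ** transpose V" and c: "\<forall>i. c $ i \<noteq> 0"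
  shows "frob_norm (inv_retr X Y) = sqrt (\<Sum>i\<in>UNIV. (1 - (c $ i)\<^sup>2) / (c $ i)\<^sup>2)"
proof -
  let ?K = "mat 1 - X ** transpose X" and ?D = "diag_mat (\<chi> i. inverse (c $ i))"
  let ?M = "?K ** Y ** V ** ?D"
  have "inv_retr X Y = ?M ** transpose U"
    using matrix_inv_svd[OF U V c] by (simp add: inv_retr_def P matrix_mul_assoc)
  then have frob: "frob_norm (inv_retr X Y) = frob_norm ?M"
    using frob_norm_mult_orthogonal[OF U] by simp
  have KY: "transpose (?K ** Y) ** (?K ** Y) = mat 1 - V ** diag_mat (c * c) ** transpose V"
    using gram_complement_projection[OF XX YY] gram_svd[OF U] by (simp add: P)
  have "transpose V ** (mat 1 - V ** diag_mat (c * c) ** transpose V) ** V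
      = transpose V ** V - (transpose V ** V) ** diag_mat (c * c) ** (transpose V ** V)"
    by (simp add: matrix_diff_ldistrib matrix_diff_rdistrib matrix_mul_assoc)
  also have "\<dots> = mat 1 - diag_mat (c * c)"
    using V by (simp add: orthogonal_mat_def)
  also have "\<dots> = diag_mat (1 - c * c)"
    by (simp add: diag_mat_diff flip: diag_mat_one)
  finally have VKYV: "transpose V ** (transpose (?K ** Y) ** (?K ** Y)) ** V = diag_mat (1 - c * c)"
    by (simp only: KY)
  have "transpose ?M ** ?M = ?D ** (transpose V ** (transpose (?K ** Y) ** (?K ** Y)) ** V) ** ?D"
    by (simp add: matrix_transpose_mul transpose_diag_mat matrix_mul_assoc)
  also have "\<dots> = diag_mat ((\<chi> i. inverse (c $ i)) * (1 - c * c) * (\<chi> i. inverse (c $ i)))"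
    by (simp only: VKYV diag_mat_mult)
  finally have "trace (transpose ?M ** ?M) = (\<Sum>i\<in>UNIV. (1 - (c $ i)\<^sup>2) / (c $ i)\<^sup>2)"
    using c by (simp add: trace_diag_mat power2_eq_square field_simps)
  then show ?thesis
    by (simp only: frob frob_norm_eq_sqrt_trace[of ?M])
qed

lemma frob_norm_inv_retr_eq_tan:
  fixes X Y :: "real^'k^'d"
  assumes XX: "transpose X ** X = mat 1" and YY: "transpose Y ** Y = mat 1"
    and angles: "principal_angles X Y \<theta>" and acute: "\<forall>i. \<theta> $ i < pi / 2"
  shows "frob_norm (inv_retr X Y) = vec_norm2 (\<chi> i. tan (\<theta> $ i))"
proof -
  obtain U V where nonneg: "\<forall>i. 0 \<le> \<theta> $ i" and U: "orthogonal_mat U" and V: "orthogonal_mat V"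
    and P: "transpose X ** Y = U ** diag_mat (\<chi> i. cos (\<theta> $ i)) ** transpose V"
    using angles unfolding principal_angles_def by blast
  have cos_pos: "0 < cos (\<theta> $ i)" for i
    using nonneg acute by (intro cos_gt_zero_pi) (auto simp: less_le_trans[of _ 0])
  have "(1 - (cos (\<theta> $ i))\<^sup>2) / (cos (\<theta> $ i))\<^sup>2 = (tan (\<theta> $ i))\<^sup>2" for i
    by (simp add: tan_def power_divide sin_squared_eq)
  then show ?thesis
    using frob_norm_inv_retr_svd[OF XX YY U V P] cos_pos
    by (simp add: vec_norm2_def less_imp_neq[symmetric])
qed

lemma vec_norm2_le_scaled:
  assumes "0 \<le> a" and "\<And>i. \<bar>u $ i\<bar> \<le> a * \<bar>v $ i\<bar>"
  shows "vec_norm2 u \<le> a * vec_norm2 v"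
proof -
  have "(u $ i)\<^sup>2 \<le> a\<^sup>2 * (v $ i)\<^sup>2" for i
    using power_mono[OF assms(2)[of i], of 2] by (simp add: power_mult_distrib)
  then have "vec_norm2 u \<le> sqrt (\<Sum>i\<in>UNIV. a\<^sup>2 * (v $ i)\<^sup>2)"
    unfolding vec_norm2_def by (intro real_sqrt_le_mono sum_mono)
  also have "\<dots> = a * vec_norm2 v"
    using assms(1) by (simp add: vec_norm2_def real_sqrt_mult flip: sum_distrib_left)
  finally show ?thesis .
qed

lemma sin_le_tan:
  fixes x :: real
  assumes "0 \<le> x" and "x < pi / 2"
  shows "sin x \<le> tan x"
proof -
  have "0 < cos x" and "cos x \<le> 1" and "0 \<le> sin x"
    using assms by (auto intro!: cos_gt_zero_pi sin_ge_zero)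
  then show ?thesis
    by (simp add: tan_def le_divide_eq mult_left_le)
qed

lemma x_cos_le_sin:
  fixes x :: real
  assumes "0 \<le> x" and "x \<le> pi"
  shows "x * cos x \<le> sin x"
proof -
  have "sin 0 - 0 * cos 0 \<le> sin x - x * cos x"
  proof (rule DERIV_nonneg_imp_nondecreasing[OF assms(1)])
    fix u assume "0 \<le> u" "u \<le> x"
    then have "0 \<le> u * sin u"
      using assms by (simp add: sin_ge_zero)
    moreover have "DERIV (\<lambda>u. sin u - u * cos u) u :> u * sin u"
      by (auto intro!: derivative_eq_intros simp: field_simps)
    ultimately show "\<exists>y. DERIV (\<lambda>u. sin u - u * cos u) u :> y \<and> 0 \<le> y"
      by blast
  qed
  then show ?thesis
    by simp
qed

lemma jordan_inequality:
  fixes x :: real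
  assumes "0 \<le> x" and "x \<le> pi / 2"
  shows "x \<le> pi / 2 * sin x"
proof (cases "x = 0")
  case False
  then have "0 < x"
    using assms(1) by simp
  have "sin (pi / 2) / (pi / 2) \<le> sin x / x"
  proof (rule DERIV_nonpos_imp_nonincreasing[OF assms(2)])
    fix u assume u: "x \<le> u" "u \<le> pi / 2"
    then have "u * cos u - sin u \<le> 0"
      using x_cos_le_sin[of u] \<open>0 < x\<close> by simp
    then have "(u * cos u - sin u) / u\<^sup>2 \<le> 0"
      by (simp add: divide_nonpos_nonneg)
    moreover have "DERIV (\<lambda>u. sin u / u) u :> (u * cos u - sin u) / u\<^sup>2"
      using u \<open>0 < x\<close> by (auto intro!: derivative_eq_intros simp: field_simps power2_eq_square)
    ultimately show "\<exists>y. DERIV (\<lambda>u. sin u / u) u :> y \<and> y \<le> 0"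
      by blast
  qed
  then show ?thesis
    using \<open>0 < x\<close> by (simp add: field_simps)
qed simp

lemma tan_le_sqrt2_mult:
  fixes x :: real
  assumes "0 \<le> x" and "x \<le> pi / 4"
  shows "tan x \<le> sqrt 2 * x"
proof -
  have cos: "sqrt 2 / 2 \<le> cos x"
    using cos_monotone_0_pi_le[of x "pi / 4"] assms by (simp add: cos_45)
  have cos_pos: "0 < cos x"
    using assms pi_gt_zero by (intro cos_gt_zero_pi) linarith+
  have "tan x \<le> x / cos x"
    unfolding tan_def using sin_x_le_x[OF assms(1)] cos_pos by (simp add: divide_right_mono)
  also have "\<dots> \<le> x / (sqrt 2 / 2)"
    using assms(1) cos cos_pos by (intro divide_left_mono) auto
  also have "\<dots> = (2 / sqrt 2) * x"
    by simp
  also have "2 / sqrt 2 = sqrt 2"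
    using real_div_sqrt[of 2] by simp
  finally show ?thesis .
qed

theorem lemma9:
  fixes X Y :: "real^'k^'d" and \<theta> :: "real^'k"
  assumes "transpose X ** X = mat 1" and "transpose Y ** Y = mat 1"
    and "principal_angles X Y \<theta>"
    and "\<forall>i. \<bar>\<theta> $ i\<bar> \<le> pi / 4"
  shows "pi / 2 * frob_norm (inv_retr X Y) \<ge> pi / 2 * dist_F \<theta>
       \<and> pi / 2 * dist_F \<theta> \<ge> dist_A \<theta>
       \<and> dist_A \<theta> \<ge> 1 / sqrt 2 * frob_norm (inv_retr X Y)"
proof -
  have \<theta>: "0 \<le> \<theta> $ i" "\<theta> $ i \<le> pi / 4" for i
    using assms(3,4) by (auto simp: principal_angles_def abs_le_iff)
  have acute: "\<theta> $ i < pi / 2" for i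
    using \<theta>(2)[of i] pi_gt_zero by linarith
  then have frob: "frob_norm (inv_retr X Y) = vec_norm2 (\<chi> i. tan (\<theta> $ i))"
    by (intro frob_norm_inv_retr_eq_tan[OF assms(1-3)]) simp
  have sin_tan: "\<bar>sin (\<theta> $ i)\<bar> \<le> 1 * \<bar>tan (\<theta> $ i)\<bar>" for i
    using \<theta>(1)[of i] acute[of i] sin_le_tan[of "\<theta> $ i"] sin_ge_zero[of "\<theta> $ i"] by simp
  have arc_sin: "\<bar>\<theta> $ i\<bar> \<le> pi / 2 * \<bar>sin (\<theta> $ i)\<bar>" for i
    using \<theta>[of i] jordan_inequality[of "\<theta> $ i"] sin_ge_zero[of "\<theta> $ i"] by simp
  have tan_arc: "\<bar>tan (\<theta> $ i)\<bar> \<le> sqrt 2 * \<bar>\<theta> $ i\<bar>" for i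
    using \<theta>[of i] acute[of i] tan_le_sqrt2_mult[of "\<theta> $ i"] tan_gt_zero[of "\<theta> $ i"]
    by (cases "\<theta> $ i = 0") simp_all
  have "dist_F \<theta> \<le> frob_norm (inv_retr X Y)"
    using vec_norm2_le_scaled[of 1 "\<chi> i. sin (\<theta> $ i)" "\<chi> i. tan (\<theta> $ i)"] sin_tan
    by (simp add: frob dist_F_def)
  moreover have "dist_A \<theta> \<le> pi / 2 * dist_F \<theta>"
    using vec_norm2_le_scaled[of "pi / 2" \<theta> "\<chi> i. sin (\<theta> $ i)"] arc_sin
    by (simp add: dist_A_def dist_F_def)
  moreover have "frob_norm (inv_retr X Y) \<le> sqrt 2 * dist_A \<theta>"
    using vec_norm2_le_scaled[of "sqrt 2" "\<chi> i. tan (\<theta> $ i)" \<theta>] tan_arc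
    by (simp add: frob dist_A_def)
  ultimately show ?thesis
    by (simp add: mult_left_mono field_simps)
qed

end
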